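(* Let $p$ be an odd prime, $\zeta_p = e^{2\pi i/p}$, and for $1 \leq i \leq p-1$ let $$\rho_i = \sqrt{2} - \frac{2\sqrt{2}}{(1+\sqrt{2})^{-2/p}\zeta_p^i + 1},$$ where $(1+\sqrt{2})^{-2/p}$ is the positive real value (these are the non-real roots of $\frac{1}{2\sqrt{2}}\left((1+\sqrt{2})(x+\sqrt{2})^p - (1-\sqrt{2})(x-\sqrt{2})^p\right)$). Then $$\prod_{i=1}^{p-1} |\operatorname{Im}(\rho_i)| \geq p\, 2^{\frac{p-3}{2}}.$$ *)

theory Defs
  imports "HOL-Analysis.Analysis" "HOL-Computational_Algebra.Primes"
begin

definition zeta :: "nat \<Rightarrow> complex" where
  "zeta p = exp (2 * complex_of_real pi * \<i> / of_nat p)"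

definition rho :: "nat \<Rightarrow> nat \<Rightarrow> complex" where
  "rho p i = complex_of_real (sqrt 2) - complex_of_real (2 * sqrt 2) /
      (complex_of_real ((1 + sqrt 2) powr (- 2 / real p)) * zeta p ^ i + 1)"

end

theory Submission
  imports Defs "HOL-Computational_Algebra.Polynomial"
begin

text \<open>
  Let \<open>r = (1 + sqrt 2) powr (-2/p)\<close> and \<open>\<zeta> = zeta p\<close>. Since \<open>Im (a / (w + 1)) = - a Im w / |w + 1|\<^sup>2\<close>
  for real \<open>a\<close>, and \<open>2 |Im u| = |u - 1| |u + 1|\<close> on the unit circle, every \<open>|Im \<rho>\<^sub>i|\<close> equals
  \<open>sqrt 2 r |\<zeta>\<^sup>i - 1| |\<zeta>\<^sup>i + 1| / |1 + r \<zeta>\<^sup>i|\<^sup>2\<close>. Evaluating \<open>\<Prod> (x - \<zeta>\<^sup>i) = x\<^sup>p - 1\<close> (over \<open>i < p\<close>) at suitable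
  points, the three factors have products \<open>p\<close>, \<open>1\<close> and \<open>(1 + r\<^sup>p) / (1 + r)\<close> over \<open>1 \<le> i < p\<close>.
  Because \<open>r\<^sup>p = 3 - 2 sqrt 2\<close> satisfies \<open>(1 + r\<^sup>p)\<^sup>2 = 8 r\<^sup>p\<close>, the product of the \<open>|Im \<rho>\<^sub>i|\<close>
  collapses to \<open>p 2\<^sup>m (1 + r)\<^sup>2 / (8 r)\<close> with \<open>p = 2 m + 1\<close>, and \<open>(1 + r)\<^sup>2 \<ge> 4 r\<close> finishes the proof.
\<close>

lemma zeta_power: "zeta n ^ i = exp (2 * of_real pi * \<i> * of_nat i / of_nat n)"
  unfolding zeta_def by (simp add: exp_of_nat_mult [symmetric] field_simps)

lemma norm_zeta_power [simp]: "cmod (zeta n ^ i) = 1"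
  by (simp add: zeta_def norm_power norm_exp_eq_Re)

lemma prod_diff_zeta_power:
  assumes "n \<ge> 1"
  shows "(\<Prod>i<n. x - zeta n ^ i) = x ^ n - 1"
proof -
  define Q where "Q = (\<Prod>i<n. [:- (zeta n ^ i), 1:])"
  define P :: "complex poly" where "P = monom 1 n - 1"
  define A where "A = {exp (2 * of_real pi * \<i> * of_nat j / of_nat n) | j::nat. j < n}"
  have "Q = P"
  proof (rule poly_eqI_degree_lead_coeff [of Q n P A])
    show "card A \<ge> n"
      unfolding A_def by (simp add: card_complex_roots_unity_explicit)
    show "degree Q \<le> n" "coeff Q n = coeff P n"
      using lead_coeff_prod [of "\<lambda>i. [:- (zeta n ^ i), 1:]" "{..<n}"] assms
      by (simp_all add: Q_def P_def degree_prod_eq_sum_degree coeff_monom)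
    show "degree P \<le> n"
      unfolding P_def by (intro degree_diff_le) (auto simp: degree_monom_le)
  next
    fix y assume "y \<in> A"
    then obtain j where j: "j < n" "y = zeta n ^ j"
      unfolding A_def by (auto simp: zeta_power)
    then have "poly Q y = 0"
      unfolding Q_def poly_prod by (intro prod_zero) (auto intro!: bexI [of _ j])
    moreover have "poly P y = 0"
      using j assms by (simp add: P_def poly_monom zeta_power complex_root_unity)
    ultimately show "poly Q y = poly P y" by simp
  qed
  then have "poly Q x = poly P x" by simp
  then show ?thesis
    unfolding Q_def P_def poly_prod by (simp add: poly_monom)
qed

lemma lessThan_eq_insert_0_atLeastLessThan:
  "n \<ge> 1 \<Longrightarrow> {..<n} = insert (0::nat) {1..<n}"
  by auto

text \<open>Cancel \<open>x - 1\<close> in \<open>x\<^sup>n - 1 = (x - 1) (1 + x + \<dots> + x\<^sup>n\<^sup>-\<^sup>1)\<close> as polynomials, then set \<open>x = 1\<close>.\<close>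
lemma prod_one_minus_zeta_power:
  assumes "n \<ge> 1"
  shows "(\<Prod>i\<in>{1..<n}. 1 - zeta n ^ i) = of_nat n"
proof -
  define G where "G = (\<Prod>i\<in>{1..<n}. [:- (zeta n ^ i), 1:])"
  define H :: "complex poly" where "H = (\<Sum>k<n. monom 1 k)"
  have "poly ([:-1, 1:] * G) x = poly ([:-1, 1:] * H) x" for x
  proof -
    have "poly ([:-1, 1:] * G) x = (\<Prod>i<n. x - zeta n ^ i)"
      unfolding G_def poly_mult poly_prod lessThan_eq_insert_0_atLeastLessThan [OF assms]
      by simp
    also have "\<dots> = x ^ n - 1"
      by (rule prod_diff_zeta_power [OF assms])
    also have "\<dots> = poly ([:-1, 1:] * H) x"
      unfolding H_def poly_mult poly_sum by (simp add: poly_monom power_diff_1_eq)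
    finally show ?thesis .
  qed
  then have "poly ([:-1, 1:] * G) = poly ([:-1, 1:] * H)" ..
  then have "[:-1, 1:] * G = [:-1, 1:] * H"
    by (simp only: poly_eq_poly_eq_iff)
  then have "G = H"
    by (simp only: mult_cancel_left) simp
  then have "poly G 1 = poly H 1" by simp
  then show ?thesis
    unfolding G_def H_def poly_prod poly_sum by (simp add: poly_monom)
qed

lemma prod_one_plus_mult_zeta_power:
  assumes "odd n"
  shows "(\<Prod>i<n. 1 + c * zeta n ^ i) = 1 + c ^ n"
proof (cases "c = 0")
  case True
  with assms show ?thesis by (cases n) auto
next
  case False
  have "n \<ge> 1" using assms by (cases n) auto
  have "(\<Prod>i<n. 1 + c * zeta n ^ i) = (\<Prod>i<n. (- c) * (- 1 / c - zeta n ^ i))"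
    using False by (intro prod.cong) (auto simp: field_simps)
  also have "\<dots> = (- c) ^ n * ((- 1 / c) ^ n - 1)"
    by (simp only: prod.distrib prod_constant card_lessThan prod_diff_zeta_power [OF \<open>n \<ge> 1\<close>])
  also have "\<dots> = 1 + c ^ n"
    using False assms by (simp add: right_diff_distrib power_mult_distrib [symmetric])
  finally show ?thesis .
qed

lemma prod_norm_one_plus_real_zeta_power:
  assumes "odd n" and "r \<ge> 0"
  shows "(\<Prod>i\<in>{1..<n}. cmod (1 + of_real r * zeta n ^ i)) = (1 + r ^ n) / (1 + r)"
proof -
  have "n \<ge> 1" using assms(1) by (cases n) auto
  have norm_real: "cmod (1 + of_real x) = 1 + x" if "x \<ge> 0" for x :: real
    using that by (metis abs_of_nonneg norm_of_real of_real_1 of_real_add add_nonneg_nonneg zero_le_one)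
  have "(1 + r) * (\<Prod>i\<in>{1..<n}. cmod (1 + of_real r * zeta n ^ i))
      = cmod (\<Prod>i<n. 1 + of_real r * zeta n ^ i)"
    using assms(2) norm_real [of r]
    by (simp add: lessThan_eq_insert_0_atLeastLessThan [OF \<open>n \<ge> 1\<close>] prod_norm norm_mult)
  also have "\<dots> = 1 + r ^ n"
    unfolding prod_one_plus_mult_zeta_power [OF assms(1)]
    using norm_real [of "r ^ n"] assms(2) by simp
  finally show ?thesis
    using assms(2) by (simp add: field_simps)
qed

lemma norm_diff_one_mult_norm_add_one:
  assumes "cmod u = 1"
  shows "cmod (u - 1) * cmod (u + 1) = 2 * \<bar>Im u\<bar>"
proof -
  have "u * cnj u = 1"
    using complex_norm_square [of u] assms by simp
  then have "(u - 1) * (u + 1) = u * (u - cnj u)"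
    by (simp add: algebra_simps power2_eq_square)
  then have "cmod (u - 1) * cmod (u + 1) = cmod u * cmod (u - cnj u)"
    by (metis norm_mult)
  then show ?thesis
    using assms by (simp add: complex_diff_cnj norm_mult)
qed

definition rho_radius :: "nat \<Rightarrow> real" where
  "rho_radius p = (1 + sqrt 2) powr (- 2 / real p)"

lemma rho_radius_pos: "rho_radius p > 0"
proof -
  have "1 + sqrt 2 > 0"
    by (simp add: add_pos_nonneg)
  then show ?thesis
    by (simp add: rho_radius_def)
qed

lemma rho_radius_power:
  assumes "p > 0"
  shows "rho_radius p ^ p = 3 - 2 * sqrt 2"
proof -
  have pos: "1 + sqrt 2 > 0"
    by (simp add: add_pos_nonneg)
  have "rho_radius p ^ p = (1 + sqrt 2) powr (- 2)"
    using assms pos rho_radius_pos [of p]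
    by (simp add: rho_radius_def powr_realpow [symmetric] powr_powr)
  also have "\<dots> = 1 / (1 + sqrt 2) ^ 2"
    using pos by (simp add: powr_minus powr_numeral divide_inverse)
  also have "\<dots> = 3 - 2 * sqrt 2"
  proof -
    have "(1 + sqrt 2) ^ 2 * (3 - 2 * sqrt 2) = 1"
      by (simp add: power2_eq_square algebra_simps)
    then show ?thesis
      using pos by (simp add: field_simps)
  qed
  finally show ?thesis .
qed

lemma abs_Im_rho:
  "\<bar>Im (rho p i)\<bar> = sqrt 2 * rho_radius p * (cmod (zeta p ^ i - 1) * cmod (zeta p ^ i + 1))
      / cmod (1 + of_real (rho_radius p) * zeta p ^ i) ^ 2"
proof -
  define r where "r = rho_radius p"
  define u where "u = zeta p ^ i"
  have "Im (rho p i) = 2 * sqrt 2 * (r * Im u) / cmod (1 + of_real r * u) ^ 2"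
    unfolding rho_def r_def rho_radius_def u_def
    by (simp add: Im_divide' add.commute)
  then have "\<bar>Im (rho p i)\<bar> = sqrt 2 * r * (2 * \<bar>Im u\<bar>) / cmod (1 + of_real r * u) ^ 2"
    using rho_radius_pos [of p] by (simp add: r_def abs_mult)
  also have "2 * \<bar>Im u\<bar> = cmod (u - 1) * cmod (u + 1)"
    by (simp add: u_def norm_diff_one_mult_norm_add_one)
  finally show ?thesis
    by (simp add: r_def u_def)
qed

lemma prod_abs_Im_rho:
  assumes "odd p"
  defines "r \<equiv> rho_radius p"
  shows "(\<Prod>i\<in>{1..<p}. \<bar>Im (rho p i)\<bar>) = real p * (sqrt 2 * r) ^ (p - 1) * ((1 + r) / (1 + r ^ p)) ^ 2"
proof -
  have "p \<ge> 1" using assms(1) by (cases p) auto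
  have minus: "(\<Prod>i\<in>{1..<p}. cmod (zeta p ^ i - 1)) = real p"
    using arg_cong [OF prod_one_minus_zeta_power [OF \<open>p \<ge> 1\<close>], of cmod]
    by (simp add: prod_norm norm_minus_commute)
  have plus: "(\<Prod>i\<in>{1..<p}. cmod (zeta p ^ i + 1)) = 1"
    using prod_norm_one_plus_real_zeta_power [OF assms(1), of 1] by (simp add: add.commute)
  have "(\<Prod>i\<in>{1..<p}. \<bar>Im (rho p i)\<bar>)
      = (sqrt 2 * r) ^ (p - 1) * ((\<Prod>i\<in>{1..<p}. cmod (zeta p ^ i - 1)) * (\<Prod>i\<in>{1..<p}. cmod (zeta p ^ i + 1)))
        / (\<Prod>i\<in>{1..<p}. cmod (1 + of_real r * zeta p ^ i)) ^ 2"
    unfolding abs_Im_rho r_def by (simp add: prod.distrib prod_dividef prod_power_distrib)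
  also have "\<dots> = real p * (sqrt 2 * r) ^ (p - 1) * ((1 + r) / (1 + r ^ p)) ^ 2"
    using prod_norm_one_plus_real_zeta_power [OF assms(1), of r] rho_radius_pos [of p]
    unfolding minus plus r_def by (simp add: power_divide)
  finally show ?thesis .
qed

lemma sqrt2_power_mult_ratio_ge:
  fixes r :: real
  assumes "odd p" and "r > 0" and r_power: "r ^ p = 3 - 2 * sqrt 2"
  shows "(sqrt 2 * r) ^ (p - 1) * ((1 + r) / (1 + r ^ p)) ^ 2 \<ge> 2 powr ((real p - 3) / 2)"
proof -
  obtain m where p: "p = 2 * m + 1"
    using assms(1) oddE by blast
  have exponent: "(real p - 3) / 2 = real m - 1"
    unfolding p by simp
  have "2 powr ((real p - 3) / 2) = 2 powr real m / 2 powr 1"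
    unfolding exponent by (rule powr_diff)
  also have "\<dots> = 2 ^ m * (4 * r) / (8 * r)"
    using assms(2) by (simp add: powr_realpow)
  also have "\<dots> \<le> 2 ^ m * (1 + r) ^ 2 / (8 * r)"
    using assms(2) sum_power2_ge_zero [of "1 - r" 0]
    by (intro divide_right_mono mult_left_mono) (auto simp: power2_eq_square algebra_simps)
  also have "\<dots> = (sqrt 2 * r) ^ (p - 1) * ((1 + r) / (1 + r ^ p)) ^ 2"
  proof -
    have "(1 + r ^ p) ^ 2 = 8 * r ^ p"
      unfolding r_power by (simp add: power2_eq_square algebra_simps)
    moreover have "(sqrt 2 * r) ^ (p - 1) = 2 ^ m * r ^ p / r"
      using assms(2) by (simp add: p power_mult_distrib power_mult)
    ultimately show ?thesis
      using assms(2) by (simp add: power_divide)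
  qed
  finally show ?thesis .
qed

theorem theorem6p1:
  fixes p :: nat
  assumes "prime p" and "odd p"
  shows "(\<Prod>i=1..p-1. \<bar>Im (rho p i)\<bar>) \<ge> real p * 2 powr ((real p - 3) / 2)"
proof -
  have "p > 0" \<comment> \<open>the only use of primality: the argument works for every odd \<open>p\<close>\<close>
    using assms(1) prime_gt_0_nat by blast
  have "{1..p-1} = {1..<p}"
    using \<open>p > 0\<close> by auto
  then have "(\<Prod>i=1..p-1. \<bar>Im (rho p i)\<bar>)
      = real p * ((sqrt 2 * rho_radius p) ^ (p - 1) * ((1 + rho_radius p) / (1 + rho_radius p ^ p)) ^ 2)"
    using prod_abs_Im_rho [OF assms(2)] by simp
  also have "\<dots> \<ge> real p * 2 powr ((real p - 3) / 2)"
    by (intro mult_left_mono sqrt2_power_mult_ratio_ge assms(2) rho_radius_pos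
        rho_radius_power \<open>p > 0\<close>) simp
  finally show ?thesis .
qed

end
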